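(* Let $Z$ be a critical Galton–Watson process with $Z_0=1$ and non-degenerate offspring variable $\xi$ (i.e. $\mathbf{E}\xi=1$ and $\mathbf{P}(\xi=1)<1$). There exist finite constants $c_1,c_2$ such that $$\mathbf{P}(M_{m+1}\geq k)\leq c_1\frac{mB_k}{k^2}+m\,\mathbf{P}(\xi>k/2)$$ for all integers $k,m\geq1$ satisfying $k/(mB_k)>c_2$.
   Context: $M_m:=\max_{0\leq l\leq m-1}Z_l$. For $R\geq2$, $B_R:=\mathbf{E}\{\xi(\xi-1);\,\xi\leq R\}$. No index-$(1+\alpha)$ assumption is made here. *)

theory Defs
  imports "HOL-Probability.Probability"
begin

fun offspring_sum :: "nat pmf \<Rightarrow> nat \<Rightarrow> nat pmf" where
  "offspring_sum p 0 = return_pmf 0"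
| "offspring_sum p (Suc z) = bind_pmf p (\<lambda>a. map_pmf (\<lambda>b. a + b) (offspring_sum p z))"

text \<open>Joint law of the path [Z_0, Z_1, ..., Z_n] of the Galton-Watson process with
  offspring law p and Z_0 = 1 (Markov chain: given Z_l = z, Z_(l+1) is a sum of z iid
  offspring variables).\<close>
fun gw_path :: "nat pmf \<Rightarrow> nat \<Rightarrow> nat list pmf" where
  "gw_path p 0 = return_pmf [1]"
| "gw_path p (Suc n) =
     bind_pmf (gw_path p n) (\<lambda>xs. map_pmf (\<lambda>z. xs @ [z]) (offspring_sum p (last xs)))"

text \<open>M_m = max_{0 \<le> l \<le> m-1} Z_l, evaluated on a path [Z_0,...,Z_(m-1)].\<close>
definition path_max :: "nat list \<Rightarrow> nat" where
  "path_max xs = Max (set xs)"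

definition trunc_B :: "nat pmf \<Rightarrow> nat \<Rightarrow> real" where
  "trunc_B p R = (\<Sum>x\<le>R. real x * (real x - 1) * pmf p x)"

end

(*
  Let \<tau> be the first time the process reaches k. Since E \<xi> \<le> 1, the killed process
  Z_n 1{\<tau> > n} is a supermartingale, so its mean stays \<le> 1. Given Z_n = z < k, the capped
  square min(Z_(n+1), k)^2 exceeds z^2 in mean by at most
  z (E[\<xi>^2; \<xi> \<le> k/2] + k^2 P(\<xi> > k/2)): offspring above k/2 are charged the full cap k^2,
  the others their second moment. Summing over m steps,
  k^2 P(M_(m+1) \<ge> k) \<le> E min(Z_(\<tau>\<and>m), k)^2 \<le> 1 + m (B_k + 1 + k^2 P(\<xi> > k/2)),
  and 1 + m (B_k + 1) \<le> (1 + 2/b) m B_k with b the least positive value of B.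
*)

theory Submission
  imports Defs
begin

definition second_moment_le_half :: "nat pmf \<Rightarrow> nat \<Rightarrow> ennreal" where
  "second_moment_le_half p k = (\<integral>\<^sup>+ a. of_nat (a^2) * indicator {a. 2 * a \<le> k} a \<partial>p)"

lemma nn_integral_offspring_sum_min_le:
  fixes p :: "nat pmf" and k :: nat
  assumes mean: "(\<integral>\<^sup>+ x. ennreal (real x) \<partial>p) \<le> 1"
  shows "(\<integral>\<^sup>+ s. of_nat (min (c + s) k) \<partial>offspring_sum p z) \<le> (of_nat (c + z) :: ennreal)"
proof (induction z arbitrary: c)
  case 0
  show ?case by (simp add: of_nat_mono)
next
  case (Suc z)
  have "(\<integral>\<^sup>+ s. of_nat (min (c + s) k) \<partial>offspring_sum p (Suc z))
      = (\<integral>\<^sup>+ a. (\<integral>\<^sup>+ s. of_nat (min (c + a + s) k) \<partial>offspring_sum p z) \<partial>p)"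
    by (simp add: add.assoc)
  also have "\<dots> \<le> (\<integral>\<^sup>+ a. of_nat (c + z) + ennreal (real a) \<partial>p)"
  proof (rule nn_integral_mono)
    fix a
    have "(\<integral>\<^sup>+ s. of_nat (min (c + a + s) k) \<partial>offspring_sum p z) \<le> of_nat (c + a + z)"
      by (rule Suc.IH)
    also have "\<dots> = of_nat (c + z) + ennreal (real a)"
      by (simp add: ennreal_of_nat_eq_real_of_nat)
    finally show "(\<integral>\<^sup>+ s. of_nat (min (c + a + s) k) \<partial>offspring_sum p z)
        \<le> of_nat (c + z) + ennreal (real a)" .
  qed
  also have "\<dots> = of_nat (c + z) + (\<integral>\<^sup>+ a. ennreal (real a) \<partial>p)"
    by (simp add: nn_integral_add emeasure_pmf)
  also have "\<dots> \<le> of_nat (c + Suc z)"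
    using mean by (simp add: add_left_mono)
  finally show ?case .
qed

lemma nn_integral_offspring_sum_min_sq_le:
  fixes p :: "nat pmf" and k :: nat
  assumes mean: "(\<integral>\<^sup>+ x. ennreal (real x) \<partial>p) \<le> 1"
  shows "(\<integral>\<^sup>+ s. of_nat ((min (c + s) k)^2) \<partial>offspring_sum p z)
    \<le> of_nat ((c + z)^2) + of_nat z * (second_moment_le_half p k
         + of_nat (k^2) * emeasure p {a. k < 2 * a})"
proof (induction z arbitrary: c)
  case 0
  show ?case by (simp add: of_nat_mono power_mono)
next
  case (Suc z)
  define W where "W = second_moment_le_half p k + of_nat (k^2) * emeasure p {a. k < 2 * a}"
  have step: "(\<integral>\<^sup>+ s. of_nat ((min (c + a + s) k)^2) \<partial>offspring_sum p z)
      \<le> of_nat ((c + z)^2) + of_nat (2 * (c + z)) * of_nat a + of_nat z * W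
         + (of_nat (a^2) * indicator {a. 2 * a \<le> k} a + of_nat (k^2) * indicator {a. k < 2 * a} a)"
    for a
  proof (cases "k < 2 * a")
    case True
    have "(\<integral>\<^sup>+ s. of_nat ((min (c + a + s) k)^2) \<partial>offspring_sum p z)
        \<le> (\<integral>\<^sup>+ s. of_nat (k^2) \<partial>offspring_sum p z)"
      by (intro nn_integral_mono) (simp add: power_mono)
    then show ?thesis
      using True by (simp add: emeasure_pmf add_increasing)
  next
    case False
    have "(c + a + z)^2 = (c + z)^2 + 2 * (c + z) * a + a^2"
      by (simp add: power2_eq_square algebra_simps)
    then show ?thesis
      using False Suc.IH[of "c + a"] unfolding W_def by (simp add: ac_simps)
  qed
  have "(\<integral>\<^sup>+ s. of_nat ((min (c + s) k)^2) \<partial>offspring_sum p (Suc z))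
      = (\<integral>\<^sup>+ a. (\<integral>\<^sup>+ s. of_nat ((min (c + a + s) k)^2) \<partial>offspring_sum p z) \<partial>p)"
    by (simp add: add.assoc)
  also have "\<dots> \<le> (\<integral>\<^sup>+ a. of_nat ((c + z)^2) + of_nat (2 * (c + z)) * of_nat a + of_nat z * W
         + (of_nat (a^2) * indicator {a. 2 * a \<le> k} a + of_nat (k^2) * indicator {a. k < 2 * a} a) \<partial>p)"
    by (rule nn_integral_mono) (rule step)
  also have "\<dots> = of_nat ((c + z)^2) + of_nat (2 * (c + z)) * (\<integral>\<^sup>+ a. of_nat a \<partial>p) + of_nat z * W + W"
  proof -
    have "(\<integral>\<^sup>+ a. of_nat (a^2) * indicator {a. 2 * a \<le> k} a
        + of_nat (k^2) * indicator {a. k < 2 * a} a \<partial>p) = W"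
      unfolding W_def second_moment_le_half_def by (simp add: nn_integral_add nn_integral_cmult_indicator)
    then show ?thesis
      by (subst nn_integral_add) (simp_all add: nn_integral_add nn_integral_cmult emeasure_pmf)
  qed
  also have "\<dots> \<le> of_nat ((c + z)^2) + of_nat (2 * (c + z)) * 1 + of_nat z * W + W"
    using mean by (intro add_mono mult_left_mono order_refl) (simp_all add: ennreal_of_nat_eq_real_of_nat)
  also have "\<dots> \<le> of_nat ((c + Suc z)^2) + of_nat (Suc z) * W"
  proof -
    have "(c + Suc z)^2 = (c + z)^2 + 2 * (c + z) + 1"
      by (simp add: power2_eq_square)
    then show ?thesis
      by (simp add: algebra_simps add_increasing)
  qed
  finally show ?case unfolding W_def .
qed

lemma gw_path_nonempty: "xs \<in> set_pmf (gw_path p n) \<Longrightarrow> xs \<noteq> []"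
  by (induction n arbitrary: xs) auto

lemma path_max_snoc: "xs \<noteq> [] \<Longrightarrow> path_max (xs @ [z]) = max z (path_max xs)"
  unfolding path_max_def by (simp add: Max_insert)

(* With \<tau> the first time the path reaches k, these are Z_n 1{\<tau> > n} and min(Z_(\<tau>\<and>n), k)^2
   evaluated on a path [Z_0, ..., Z_n]. *)
definition size_if_below :: "nat \<Rightarrow> nat list \<Rightarrow> nat" where
  "size_if_below k xs = (if path_max xs < k then last xs else 0)"

definition stopped_size_sq :: "nat \<Rightarrow> nat list \<Rightarrow> nat" where
  "stopped_size_sq k xs = (if k \<le> path_max xs then k else last xs)^2"

lemma nn_integral_size_if_below_snoc_le:
  fixes p :: "nat pmf" and k :: nat
  assumes mean: "(\<integral>\<^sup>+ x. ennreal (real x) \<partial>p) \<le> 1" and "xs \<noteq> []"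
  shows "(\<integral>\<^sup>+ z. of_nat (size_if_below k (xs @ [z])) \<partial>offspring_sum p (last xs))
    \<le> of_nat (size_if_below k xs)"
proof (cases "path_max xs < k")
  case True
  have "(\<integral>\<^sup>+ z. of_nat (size_if_below k (xs @ [z])) \<partial>offspring_sum p (last xs))
      \<le> (\<integral>\<^sup>+ z. of_nat (min (0 + z) k) \<partial>offspring_sum p (last xs))"
    using \<open>xs \<noteq> []\<close> by (intro nn_integral_mono) (simp add: size_if_below_def path_max_snoc)
  also have "\<dots> \<le> of_nat (0 + last xs)"
    by (rule nn_integral_offspring_sum_min_le[OF mean])
  finally show ?thesis
    using True by (simp add: size_if_below_def)
next
  case False
  then show ?thesis
    using \<open>xs \<noteq> []\<close> by (simp add: size_if_below_def path_max_snoc)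
qed

lemma nn_integral_stopped_size_sq_snoc_le:
  fixes p :: "nat pmf" and k :: nat
  assumes mean: "(\<integral>\<^sup>+ x. ennreal (real x) \<partial>p) \<le> 1" and "xs \<noteq> []"
  defines "W \<equiv> second_moment_le_half p k + of_nat (k^2) * emeasure p {a. k < 2 * a}"
  shows "(\<integral>\<^sup>+ z. of_nat (stopped_size_sq k (xs @ [z])) \<partial>offspring_sum p (last xs))
    \<le> of_nat (stopped_size_sq k xs) + of_nat (size_if_below k xs) * W"
proof (cases "path_max xs < k")
  case True
  have "(\<integral>\<^sup>+ z. of_nat (stopped_size_sq k (xs @ [z])) \<partial>offspring_sum p (last xs))
      = (\<integral>\<^sup>+ z. of_nat ((min (0 + z) k)^2) \<partial>offspring_sum p (last xs))"
    using True \<open>xs \<noteq> []\<close>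
    by (intro nn_integral_cong) (auto simp: stopped_size_sq_def path_max_snoc le_max_iff_disj min_def)
  also have "\<dots> \<le> of_nat ((0 + last xs)^2) + of_nat (last xs) * W"
    unfolding W_def by (rule nn_integral_offspring_sum_min_sq_le[OF mean])
  finally show ?thesis
    using True by (simp add: stopped_size_sq_def size_if_below_def)
next
  case False
  then have "stopped_size_sq k (xs @ [z]) = stopped_size_sq k xs" for z
    using \<open>xs \<noteq> []\<close> by (simp add: stopped_size_sq_def path_max_snoc le_max_iff_disj)
  then show ?thesis
    by (simp add: emeasure_pmf)
qed

lemma nn_integral_size_if_below_le:
  fixes p :: "nat pmf" and k :: nat
  assumes mean: "(\<integral>\<^sup>+ x. ennreal (real x) \<partial>p) \<le> 1"
  shows "(\<integral>\<^sup>+ xs. of_nat (size_if_below k xs) \<partial>gw_path p n) \<le> 1"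
proof (induction n)
  case 0
  show ?case by (simp add: size_if_below_def path_max_def)
next
  case (Suc n)
  have "(\<integral>\<^sup>+ xs. of_nat (size_if_below k xs) \<partial>gw_path p (Suc n))
      = (\<integral>\<^sup>+ xs. (\<integral>\<^sup>+ z. of_nat (size_if_below k (xs @ [z])) \<partial>offspring_sum p (last xs)) \<partial>gw_path p n)"
    by simp
  also have "\<dots> \<le> (\<integral>\<^sup>+ xs. of_nat (size_if_below k xs) \<partial>gw_path p n)"
    by (intro nn_integral_mono_AE AE_pmfI nn_integral_size_if_below_snoc_le[OF mean] gw_path_nonempty)
  finally show ?case
    using Suc.IH by simp
qed

lemma nn_integral_stopped_size_sq_le:
  fixes p :: "nat pmf" and k :: nat
  assumes mean: "(\<integral>\<^sup>+ x. ennreal (real x) \<partial>p) \<le> 1"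
  defines "W \<equiv> second_moment_le_half p k + of_nat (k^2) * emeasure p {a. k < 2 * a}"
  shows "(\<integral>\<^sup>+ xs. of_nat (stopped_size_sq k xs) \<partial>gw_path p n) \<le> 1 + of_nat n * W"
proof (induction n)
  case 0
  have "stopped_size_sq k [1] \<le> 1"
    by (cases "k \<le> 1") (auto simp: stopped_size_sq_def path_max_def le_Suc_eq)
  then have "(of_nat (stopped_size_sq k [1]) :: ennreal) \<le> 1"
    using of_nat_mono by fastforce
  then show ?case
    by simp
next
  case (Suc n)
  have "(\<integral>\<^sup>+ xs. of_nat (stopped_size_sq k xs) \<partial>gw_path p (Suc n))
      = (\<integral>\<^sup>+ xs. (\<integral>\<^sup>+ z. of_nat (stopped_size_sq k (xs @ [z])) \<partial>offspring_sum p (last xs)) \<partial>gw_path p n)"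
    by simp
  also have "\<dots> \<le> (\<integral>\<^sup>+ xs. of_nat (stopped_size_sq k xs) + of_nat (size_if_below k xs) * W \<partial>gw_path p n)"
    unfolding W_def
    by (intro nn_integral_mono_AE AE_pmfI nn_integral_stopped_size_sq_snoc_le[OF mean] gw_path_nonempty)
  also have "\<dots> = (\<integral>\<^sup>+ xs. of_nat (stopped_size_sq k xs) \<partial>gw_path p n)
      + (\<integral>\<^sup>+ xs. of_nat (size_if_below k xs) \<partial>gw_path p n) * W"
    by (simp add: nn_integral_add nn_integral_multc)
  also have "\<dots> \<le> (1 + of_nat n * W) + 1 * W"
    by (intro add_mono mult_right_mono Suc.IH nn_integral_size_if_below_le[OF mean]) simp_all
  also have "\<dots> = 1 + of_nat (Suc n) * W"
    by (simp add: algebra_simps)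
  finally show ?case .
qed

lemma of_nat_mult_pred_nonneg: "0 \<le> real x * (real x - 1)"
  by (cases x) auto

lemma trunc_B_nonneg: "0 \<le> trunc_B p k"
  unfolding trunc_B_def by (intro sum_nonneg mult_nonneg_nonneg of_nat_mult_pred_nonneg) auto

lemma trunc_B_mono: "j \<le> k \<Longrightarrow> trunc_B p j \<le> trunc_B p k"
  unfolding trunc_B_def by (intro sum_mono2) (auto intro!: mult_nonneg_nonneg of_nat_mult_pred_nonneg)

lemma trunc_B_pos_lower_bound: "\<exists>b > 0. \<forall>k. 0 < trunc_B p k \<longrightarrow> b \<le> trunc_B p k"
proof (cases "\<exists>k. 0 < trunc_B p k")
  case True
  define k0 where "k0 = (LEAST k. 0 < trunc_B p k)"
  have "0 < trunc_B p k0"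
    unfolding k0_def using True by (rule LeastI_ex)
  moreover have "trunc_B p k0 \<le> trunc_B p k" if "0 < trunc_B p k" for k
    using that unfolding k0_def by (intro trunc_B_mono Least_le)
  ultimately show ?thesis by blast
next
  case False
  then show ?thesis by (intro exI[of _ 1]) simp
qed

lemma second_moment_le_half_le:
  "second_moment_le_half p k \<le> ennreal (trunc_B p k) + (\<integral>\<^sup>+ x. ennreal (real x) \<partial>p)"
proof -
  define f where "f a = (if a \<le> k then real a * (real a - 1) else 0)" for a
  have f_nonneg: "0 \<le> f a" for a
    by (simp add: f_def of_nat_mult_pred_nonneg)
  have "second_moment_le_half p k \<le> (\<integral>\<^sup>+ a. ennreal (f a) + ennreal (real a) \<partial>p)"
    unfolding second_moment_le_half_def
  proof (rule nn_integral_mono)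
    fix a
    show "of_nat (a^2) * indicator {a. 2 * a \<le> k} a \<le> ennreal (f a) + ennreal (real a)"
    proof (cases "2 * a \<le> k")
      case True
      then have "(of_nat (a^2) :: ennreal) = ennreal (f a + real a)"
        by (simp add: f_def ennreal_of_nat_eq_real_of_nat power2_eq_square algebra_simps)
      then show ?thesis
        using True f_nonneg by (simp add: ennreal_plus)
    qed simp
  qed
  also have "\<dots> = (\<integral>\<^sup>+ a. ennreal (f a) \<partial>p) + (\<integral>\<^sup>+ a. ennreal (real a) \<partial>p)"
    by (simp add: nn_integral_add)
  also have "(\<integral>\<^sup>+ a. ennreal (f a) \<partial>p) = (\<Sum>a\<le>k. ennreal (f a) * pmf p a)"
    by (rule nn_integral_measure_pmf_support) (auto simp: f_def)
  also have "\<dots> = ennreal (trunc_B p k)"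
    unfolding trunc_B_def using f_nonneg
    by (subst sum_ennreal[symmetric])
      (auto intro!: sum.cong mult_nonneg_nonneg of_nat_mult_pred_nonneg simp: f_def ennreal_mult'')
  finally show ?thesis .
qed

lemma prob_path_max_ge_le:
  fixes p :: "nat pmf"
  assumes mean: "(\<integral>\<^sup>+ x. ennreal (real x) \<partial>p) \<le> 1"
  shows "(real k)^2 * measure_pmf.prob (gw_path p m) {xs. k \<le> path_max xs}
    \<le> 1 + real m * (trunc_B p k + 1 + (real k)^2 * measure_pmf.prob p {x. real k / 2 < real x})"
proof -
  have "{a. k < 2 * a} = {x. real k / 2 < real x}"
    by auto
  then have tail: "emeasure p {a. k < 2 * a} = ennreal (measure_pmf.prob p {x. real k / 2 < real x})"
    by (simp add: measure_pmf.emeasure_eq_measure)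
  have "ennreal ((real k)^2 * measure_pmf.prob (gw_path p m) {xs. k \<le> path_max xs})
      = (\<integral>\<^sup>+ xs. of_nat (k^2) * indicator {xs. k \<le> path_max xs} xs \<partial>gw_path p m)"
    by (simp add: nn_integral_cmult_indicator measure_pmf.emeasure_eq_measure ennreal_mult
        ennreal_of_nat_eq_real_of_nat)
  also have "\<dots> \<le> (\<integral>\<^sup>+ xs. of_nat (stopped_size_sq k xs) \<partial>gw_path p m)"
    by (intro nn_integral_mono) (simp add: stopped_size_sq_def indicator_def)
  also have "\<dots> \<le> 1 + of_nat m * (second_moment_le_half p k + of_nat (k^2) * emeasure p {a. k < 2 * a})"
    by (rule nn_integral_stopped_size_sq_le[OF mean])
  also have "\<dots> \<le> 1 + of_nat m * ((ennreal (trunc_B p k) + 1)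
      + of_nat (k^2) * ennreal (measure_pmf.prob p {x. real k / 2 < real x}))"
    using order_trans[OF second_moment_le_half_le add_left_mono[OF mean]] unfolding tail
    by (intro add_mono mult_left_mono order_refl) auto
  also have "\<dots> = ennreal (1 + real m * (trunc_B p k + 1 + (real k)^2 * measure_pmf.prob p {x. real k / 2 < real x}))"
    using trunc_B_nonneg[of p k]
    by (simp add: ennreal_plus ennreal_mult ennreal_of_nat_eq_real_of_nat)
  finally show ?thesis
    using trunc_B_nonneg[of p k] by (subst (asm) ennreal_le_iff) (auto intro!: add_nonneg_nonneg)
qed

lemma prob_path_max_ge_le_trunc_B:
  fixes p :: "nat pmf"
  assumes mean: "(\<integral>\<^sup>+ x. ennreal (real x) \<partial>p) \<le> 1"
    and "1 \<le> k" "1 \<le> m" "0 < b" "b \<le> trunc_B p k"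
  shows "measure_pmf.prob (gw_path p m) {xs. k \<le> path_max xs}
    \<le> (1 + 2 / b) * real m * trunc_B p k / (real k)^2
      + real m * measure_pmf.prob p {x. real k / 2 < real x}"
proof -
  define B where "B = trunc_B p k"
  define P where "P = measure_pmf.prob (gw_path p m) {xs. k \<le> path_max xs}"
  define Q where "Q = measure_pmf.prob p {x. real k / 2 < real x}"
  have "1 \<le> B / b"
    using assms by (simp add: B_def)
  then have "2 * real m \<le> 2 * real m * (B / b)"
    using mult_left_mono[of 1 "B / b" "2 * real m"] by simp
  then have "1 + real m * (B + 1) \<le> (1 + 2 / b) * real m * B"
    using \<open>1 \<le> m\<close> by (simp add: algebra_simps)
  moreover have "(real k)^2 * P \<le> 1 + real m * (B + 1 + (real k)^2 * Q)"
    unfolding P_def B_def Q_def by (rule prob_path_max_ge_le[OF mean])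
  ultimately have "(real k)^2 * P \<le> (1 + 2 / b) * real m * B + (real k)^2 * (real m * Q)"
    by (simp add: algebra_simps)
  then have "P \<le> ((1 + 2 / b) * real m * B + (real k)^2 * (real m * Q)) / (real k)^2"
    using \<open>1 \<le> k\<close> by (simp add: pos_le_divide_eq mult.commute)
  also have "\<dots> = (1 + 2 / b) * real m * B / (real k)^2 + real m * Q"
    using \<open>1 \<le> k\<close> by (simp add: add_divide_distrib)
  finally show ?thesis
    unfolding P_def B_def Q_def .
qed

theorem lemma8:
  fixes p :: "nat pmf"
  assumes mean_one: "(\<integral>\<^sup>+ x. ennreal (real x) \<partial>measure_pmf p) = 1"
    and nondeg: "pmf p 1 < 1"
  shows "\<exists>c1 c2 :: real. \<forall>k m :: nat. k \<ge> 1 \<and> m \<ge> 1 \<and>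
           real k / (real m * trunc_B p k) > c2 \<longrightarrow>
           measure_pmf.prob (gw_path p m) {xs. path_max xs \<ge> k}
             \<le> c1 * real m * trunc_B p k / (real k)^2
                + real m * measure_pmf.prob p {x. real x > real k / 2}"
proof -
  obtain b where b: "0 < b" "\<And>k. 0 < trunc_B p k \<Longrightarrow> b \<le> trunc_B p k"
    using trunc_B_pos_lower_bound by blast
  show ?thesis
  proof (rule exI[of _ "1 + 2 / b"], rule exI[of _ 0], intro allI impI)
    fix k m :: nat
    assume km: "k \<ge> 1 \<and> m \<ge> 1 \<and> real k / (real m * trunc_B p k) > 0"
    then have "0 < trunc_B p k"
      using trunc_B_nonneg[of p k] by (auto simp: zero_less_divide_iff zero_less_mult_iff)
    with km b mean_one show "measure_pmf.prob (gw_path p m) {xs. path_max xs \<ge> k}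
        \<le> (1 + 2 / b) * real m * trunc_B p k / (real k)^2
          + real m * measure_pmf.prob p {x. real x > real k / 2}"
      by (intro prob_path_max_ge_le_trunc_B) auto
  qed
qed

end
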